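(* Let $M$ be a DFA with $n$ states. Then ${\rm fact}(L(M))$ can be accepted by a DFA with at most $2^{n-1}$ states, and this bound is tight: for every $n\ge1$ there exists a DFA $M$ with $n$ states such that the minimal DFA accepting ${\rm fact}(L(M))$ has exactly $2^{n-1}$ states.
   Context: DFAs are complete (one initial state, a total transition function $Q\times\Sigma\to Q$); the minimal DFA of a regular language is the complete DFA with fewest states accepting it. ${\rm fact}(L)$ is the set of all factors (contiguous subwords) of words in $L$. *)

theory Defs
  imports Main
begin

definition dfa :: "'a set \<Rightarrow> 's set \<Rightarrow> 's \<Rightarrow> ('s \<Rightarrow> 'a \<Rightarrow> 's) \<Rightarrow> 's set \<Rightarrow> bool" where
  "dfa Sig Q q0 delta F \<longleftrightarrow> finite Sig \<and> finite Q \<and> q0 \<in> Q \<and>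
     (\<forall>q\<in>Q. \<forall>a\<in>Sig. delta q a \<in> Q) \<and> F \<subseteq> Q"

definition delta_star :: "('s \<Rightarrow> 'a \<Rightarrow> 's) \<Rightarrow> 's \<Rightarrow> 'a list \<Rightarrow> 's" where
  "delta_star delta q w = foldl delta q w"

definition lang :: "'a set \<Rightarrow> 's \<Rightarrow> ('s \<Rightarrow> 'a \<Rightarrow> 's) \<Rightarrow> 's set \<Rightarrow> 'a list set" where
  "lang Sig q0 delta F = {w. set w \<subseteq> Sig \<and> delta_star delta q0 w \<in> F}"

definition fact :: "'a list set \<Rightarrow> 'a list set" where
  "fact L = {v. \<exists>u w. u @ v @ w \<in> L}"

text \<open>Number of states of the minimal complete DFA over Sig accepting L
  (state sets represented as sets of naturals, w.l.o.g.).\<close>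
definition min_dfa_states :: "'a set \<Rightarrow> 'a list set \<Rightarrow> nat" where
  "min_dfa_states Sig L = (LEAST k. \<exists>(Q::nat set) q0 delta F.
      dfa Sig Q q0 delta F \<and> lang Sig q0 delta F = L \<and> card Q = k)"

end

theory Submission
  imports Defs
begin

text \<open>A word v is a factor iff some reachable state is led by v to a live (co-accessible)
  state.  Hence the subset construction restricted to live states, started in the set of
  reachable live states and accepting every nonempty set, recognises the factor language.
  If some state is dead this gives at most 2^(n-1) states; if none is, every word over the
  alphabet is a factor and one state suffices.  For tightness take n-1 live states plus a
  sink, a letter killing each live state and a letter resetting to each live state: after
  the reset letters, the word killing exactly the states outside S leaves the set S of
  survivors, and a final word killing all states but i tests whether i \<in> S, so the
  2^(n-1) sets S are pairwise distinguishable.\<close>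

lemma delta_star_Nil [simp]: "delta_star d q [] = q"
  by (simp add: delta_star_def)

lemma delta_star_Cons [simp]: "delta_star d q (a # w) = delta_star d (d q a) w"
  by (simp add: delta_star_def)

lemma delta_star_append [simp]: "delta_star d q (u @ v) = delta_star d (delta_star d q u) v"
  by (simp add: delta_star_def)

lemma delta_star_closed:
  assumes "\<forall>q\<in>Q. \<forall>a\<in>Sig. d q a \<in> Q" "q \<in> Q" "set w \<subseteq> Sig"
  shows "delta_star d q w \<in> Q"
  using assms(2,3) by (induction w arbitrary: q) (use assms(1) in auto)

lemma delta_star_inj_on_image:
  assumes "inj_on g Q" "\<forall>q\<in>Q. \<forall>a\<in>Sig. d q a \<in> Q" "q \<in> Q" "set w \<subseteq> Sig"
  shows "delta_star (\<lambda>s a. g (d (inv_into Q g s) a)) (g q) w = g (delta_star d q w)"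
  using assms(3,4) by (induction w arbitrary: q) (use assms(1,2) in auto)

lemma dfa_rename_to_nat:
  assumes "dfa Sig Q q0 d F"
  shows "\<exists>(Q'::nat set) q0' d' F'. dfa Sig Q' q0' d' F' \<and>
     lang Sig q0' d' F' = lang Sig q0 d F \<and> card Q' = card Q"
proof -
  from assms have fin: "finite Q" and cl: "\<forall>q\<in>Q. \<forall>a\<in>Sig. d q a \<in> Q"
    and q0: "q0 \<in> Q" and FQ: "F \<subseteq> Q" and fS: "finite Sig" by (auto simp: dfa_def)
  obtain g :: "'b \<Rightarrow> nat" where g: "inj_on g Q"
    using finite_imp_inj_to_nat_seg[OF fin] by blast
  define d' where "d' = (\<lambda>s a. g (d (inv_into Q g s) a))"
  have "dfa Sig (g ` Q) (g q0) d' (g ` F)"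
    using fS fin q0 FQ cl g by (auto simp: dfa_def d'_def)
  moreover have "lang Sig (g q0) d' (g ` F) = lang Sig q0 d F"
  proof -
    have "delta_star d' (g q0) w \<in> g ` F \<longleftrightarrow> delta_star d q0 w \<in> F" if "set w \<subseteq> Sig" for w
    proof -
      have "delta_star d' (g q0) w = g (delta_star d q0 w)"
        unfolding d'_def using delta_star_inj_on_image[OF g cl q0 that] .
      then show ?thesis
        using inj_on_image_mem_iff[OF g delta_star_closed[OF cl q0 that] FQ] by simp
    qed
    then show ?thesis by (auto simp: lang_def)
  qed
  moreover have "card (g ` Q) = card Q" using card_image[OF g] .
  ultimately show ?thesis by blast
qed

definition reachable :: "'a set \<Rightarrow> 's \<Rightarrow> ('s \<Rightarrow> 'a \<Rightarrow> 's) \<Rightarrow> 's set" where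
  "reachable Sig q0 d = {delta_star d q0 u | u. set u \<subseteq> Sig}"

definition live :: "'a set \<Rightarrow> ('s \<Rightarrow> 'a \<Rightarrow> 's) \<Rightarrow> 's set \<Rightarrow> 's set" where
  "live Sig d F = {q. \<exists>w. set w \<subseteq> Sig \<and> delta_star d q w \<in> F}"

lemma live_if_delta_star_live:
  assumes "set w \<subseteq> Sig" "delta_star d q w \<in> live Sig d F"
  shows "q \<in> live Sig d F"
proof -
  from assms(2) obtain v where "set v \<subseteq> Sig" "delta_star d (delta_star d q w) v \<in> F"
    by (auto simp: live_def)
  then have "set (w @ v) \<subseteq> Sig \<and> delta_star d q (w @ v) \<in> F" using assms(1) by simp
  then show ?thesis unfolding live_def by blast
qed

lemma fact_lang_iff:
  "v \<in> fact (lang Sig q0 d F) \<longleftrightarrow>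
     set v \<subseteq> Sig \<and> (\<exists>q\<in>reachable Sig q0 d. delta_star d q v \<in> live Sig d F)"
proof
  assume "v \<in> fact (lang Sig q0 d F)"
  then obtain u w where "set u \<subseteq> Sig" "set v \<subseteq> Sig" "set w \<subseteq> Sig"
    "delta_star d (delta_star d (delta_star d q0 u) v) w \<in> F"
    by (auto simp: fact_def lang_def)
  then show "set v \<subseteq> Sig \<and> (\<exists>q\<in>reachable Sig q0 d. delta_star d q v \<in> live Sig d F)"
    unfolding reachable_def live_def by blast
next
  assume "set v \<subseteq> Sig \<and> (\<exists>q\<in>reachable Sig q0 d. delta_star d q v \<in> live Sig d F)"
  then obtain u w where "set u \<subseteq> Sig" "set v \<subseteq> Sig" "set w \<subseteq> Sig"
    "delta_star d (delta_star d (delta_star d q0 u) v) w \<in> F"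
    unfolding reachable_def live_def by blast
  then have "u @ v @ w \<in> lang Sig q0 d F" by (simp add: lang_def)
  then show "v \<in> fact (lang Sig q0 d F)" unfolding fact_def by blast
qed

lemma lang_one_state_universal: "lang Sig (0::nat) (\<lambda>_ _. 0) {0} = {w. set w \<subseteq> Sig}"
proof -
  have "delta_star (\<lambda>_ _. 0::nat) 0 w = 0" for w :: "'a list"
    by (induction w) auto
  then show ?thesis by (simp add: lang_def)
qed

text \<open>The subset construction pruned to C is exact as long as C is closed under
  predecessors, so that no run through a state outside C can re-enter C.\<close>

lemma mem_if_delta_star_mem:
  assumes cl: "\<forall>q\<in>Q. \<forall>a\<in>Sig. d q a \<in> Q"
    and pred: "\<forall>q\<in>Q. \<forall>a\<in>Sig. d q a \<in> C \<longrightarrow> q \<in> C"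
    and "p \<in> Q" "set w \<subseteq> Sig" "delta_star d p w \<in> C"
  shows "p \<in> C"
  using assms(3-5)
proof (induction w arbitrary: p)
  case (Cons a w)
  then have "d p a \<in> C" using cl by auto
  then show ?case using Cons.prems pred by auto
qed simp

lemma delta_star_pruned_subset:
  assumes cl: "\<forall>q\<in>Q. \<forall>a\<in>Sig. d q a \<in> Q"
    and pred: "\<forall>q\<in>Q. \<forall>a\<in>Sig. d q a \<in> C \<longrightarrow> q \<in> C"
    and "C \<subseteq> Q" "S \<subseteq> C" "set w \<subseteq> Sig"
  shows "delta_star (\<lambda>S a. (\<lambda>q. d q a) ` S \<inter> C) S w = (\<lambda>q. delta_star d q w) ` S \<inter> C"
  using assms(4,5)
proof (induction w arbitrary: S)
  case Nil
  then show ?case by auto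
next
  case (Cons a w)
  have a: "a \<in> Sig" and w: "set w \<subseteq> Sig" using Cons.prems(2) by auto
  have "d q a \<in> C" if "q \<in> S" "delta_star d (d q a) w \<in> C" for q
    using mem_if_delta_star_mem[OF cl pred _ w that(2)] cl a that(1) Cons.prems(1) assms(3)
    by blast
  then have "(\<lambda>q. delta_star d q w) ` ((\<lambda>q. d q a) ` S \<inter> C) \<inter> C =
      (\<lambda>q. delta_star d q (a # w)) ` S \<inter> C"
    by auto
  moreover have "(\<lambda>q. d q a) ` S \<inter> C \<subseteq> C" by blast
  ultimately show ?case
    using Cons.IH[OF _ w] by simp
qed

lemma reachable_subset:
  assumes "\<forall>q\<in>Q. \<forall>a\<in>Sig. d q a \<in> Q" "q0 \<in> Q"
  shows "reachable Sig q0 d \<subseteq> Q"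
  using delta_star_closed[OF assms] by (auto simp: reachable_def)

lemma fact_lang_eq_all_words_if_all_live:
  assumes "dfa Sig Q q0 d F" "Q \<subseteq> live Sig d F"
  shows "fact (lang Sig q0 d F) = {w. set w \<subseteq> Sig}"
proof -
  from assms(1) have cl: "\<forall>q\<in>Q. \<forall>a\<in>Sig. d q a \<in> Q" and q0: "q0 \<in> Q"
    by (auto simp: dfa_def)
  have "q0 \<in> reachable Sig q0 d"
    unfolding reachable_def by (intro CollectI exI[of _ "[]"]) simp
  moreover have "delta_star d q0 w \<in> live Sig d F" if "set w \<subseteq> Sig" for w
    using delta_star_closed[OF cl q0 that] assms(2) by blast
  ultimately show ?thesis
    unfolding set_eq_iff fact_lang_iff mem_Collect_eq by blast
qed

lemma fact_dfa_card_le: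
  assumes "dfa Sig Q q0 d F"
  shows "\<exists>(Q'::nat set) q0' d' F'. dfa Sig Q' q0' d' F' \<and>
           lang Sig q0' d' F' = fact (lang Sig q0 d F) \<and> card Q' \<le> 2 ^ (card Q - 1)"
proof (cases "Q \<subseteq> live Sig d F")
  case True
  have "dfa Sig {0::nat} 0 (\<lambda>_ _. 0) {0}" using assms by (simp add: dfa_def)
  moreover have "lang Sig (0::nat) (\<lambda>_ _. 0) {0} = fact (lang Sig q0 d F)"
    using fact_lang_eq_all_words_if_all_live[OF assms True] lang_one_state_universal by simp
  moreover have "card {0::nat} \<le> 2 ^ (card Q - 1)" by simp
  ultimately show ?thesis by blast
next
  case False
  from assms have fin: "finite Q" and cl: "\<forall>q\<in>Q. \<forall>a\<in>Sig. d q a \<in> Q"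
    and q0: "q0 \<in> Q" and fS: "finite Sig" by (auto simp: dfa_def)
  define C where "C = Q \<inter> live Sig d F"
  define R where "R = reachable Sig q0 d"
  define ds where "ds = (\<lambda>S a. (\<lambda>q. d q a) ` S \<inter> C)"
  have finC: "finite C" using fin by (simp add: C_def)
  have "C \<subset> Q" using False by (auto simp: C_def)
  then have "card C < card Q" by (rule psubset_card_mono[OF fin])
  then have card_C: "card C \<le> card Q - 1" by simp
  have CQ: "C \<subseteq> Q" by (simp add: C_def)
  have pred: "\<forall>q\<in>Q. \<forall>a\<in>Sig. d q a \<in> C \<longrightarrow> q \<in> C"
  proof (intro ballI impI)
    fix q a assume "q \<in> Q" "a \<in> Sig" "d q a \<in> C"
    then show "q \<in> C"
      using live_if_delta_star_live[of "[a]" Sig d q F] by (simp add: C_def)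
  qed
  have R: "R \<subseteq> Q" using reachable_subset[OF cl q0] by (simp add: R_def)
  have subset_dfa: "dfa Sig (Pow C) (R \<inter> C) ds (Pow C - {{}})"
    using fS finC by (auto simp: dfa_def ds_def)
  have subset_lang: "lang Sig (R \<inter> C) ds (Pow C - {{}}) = fact (lang Sig q0 d F)"
  proof (rule set_eqI)
    fix w
    have "w \<in> lang Sig (R \<inter> C) ds (Pow C - {{}}) \<longleftrightarrow>
        set w \<subseteq> Sig \<and> (\<lambda>q. delta_star d q w) ` (R \<inter> C) \<inter> C \<noteq> {}"
      using delta_star_pruned_subset[OF cl pred CQ, of "R \<inter> C" w] by (auto simp: lang_def ds_def)
    also have "\<dots> \<longleftrightarrow> set w \<subseteq> Sig \<and> (\<exists>q\<in>R. delta_star d q w \<in> live Sig d F)"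
    proof -
      have "q \<in> C \<and> delta_star d q w \<in> C"
        if "set w \<subseteq> Sig" "q \<in> R" "delta_star d q w \<in> live Sig d F" for q
        using that R delta_star_closed[OF cl _ that(1)] live_if_delta_star_live[OF that(1,3)]
        by (auto simp: C_def)
      then show ?thesis by (auto simp: C_def)
    qed
    finally show "w \<in> lang Sig (R \<inter> C) ds (Pow C - {{}}) \<longleftrightarrow> w \<in> fact (lang Sig q0 d F)"
      by (simp add: fact_lang_iff R_def)
  qed
  have subset_card: "card (Pow C) \<le> 2 ^ (card Q - 1)"
    using power_increasing[OF card_C, of "2::nat"] by (simp add: card_Pow finC)
  obtain Q' :: "nat set" and q0' d' F' where "dfa Sig Q' q0' d' F'"
    "lang Sig q0' d' F' = lang Sig (R \<inter> C) ds (Pow C - {{}})" "card Q' = card (Pow C)"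
    using dfa_rename_to_nat[OF subset_dfa] by blast
  then show ?thesis
    using subset_lang subset_card by (intro exI[of _ Q'] exI[of _ q0'] exI[of _ d'] exI[of _ F']) simp
qed

lemma dfa_card_ge_if_distinguishable:
  assumes "dfa Sig Q q0 d F" "\<forall>x\<in>A. set (u x) \<subseteq> Sig"
    and "\<And>x y. x \<in> A \<Longrightarrow> y \<in> A \<Longrightarrow> x \<noteq> y \<Longrightarrow>
      \<exists>z. set z \<subseteq> Sig \<and> (u x @ z \<in> lang Sig q0 d F \<longleftrightarrow> u y @ z \<notin> lang Sig q0 d F)"
  shows "card A \<le> card Q"
proof -
  from assms(1) have fin: "finite Q" and cl: "\<forall>q\<in>Q. \<forall>a\<in>Sig. d q a \<in> Q" and q0: "q0 \<in> Q"
    by (auto simp: dfa_def)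
  define h where "h x = delta_star d q0 (u x)" for x
  have "inj_on h A"
  proof (rule inj_onI, rule ccontr)
    fix x y assume "x \<in> A" "y \<in> A" "h x = h y" "x \<noteq> y"
    with assms(3) obtain z where "set z \<subseteq> Sig"
      "u x @ z \<in> lang Sig q0 d F \<longleftrightarrow> u y @ z \<notin> lang Sig q0 d F" by blast
    with \<open>x \<in> A\<close> \<open>y \<in> A\<close> \<open>h x = h y\<close> assms(2) show False
      by (simp add: lang_def h_def)
  qed
  moreover have "h ` A \<subseteq> Q"
    using delta_star_closed[OF cl q0] assms(2) by (auto simp: h_def)
  ultimately show ?thesis
    using card_inj_on_le[OF _ _ fin] by blast
qed

text \<open>The tight example: states 0..m-1 are live and m is a sink; letter a < m sends
  state a to the sink and fixes the other live states, letter m + i sends every live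
  state to i.\<close>

definition kill_reset :: "nat \<Rightarrow> nat \<Rightarrow> nat \<Rightarrow> nat" where
  "kill_reset m q a =
     (if q < m \<and> a < m \<and> q \<noteq> a then q
      else if q < m \<and> m \<le> a \<and> a < 2 * m then a - m
      else m)"

lemma dfa_kill_reset: "dfa {..<2 * m} {..m} 0 (kill_reset m) {..<m}"
  by (auto simp: dfa_def kill_reset_def)

lemma delta_star_kill_reset_ge: "m \<le> q \<Longrightarrow> m \<le> delta_star (kill_reset m) q v"
  by (induction v arbitrary: q) (auto simp: kill_reset_def)

lemma delta_star_kill_reset_sink: "delta_star (kill_reset m) m v = m"
  by (induction v) (auto simp: kill_reset_def)

lemma delta_star_kill_reset_kill:
  assumes "set v \<subseteq> {..<m}" "q < m"
  shows "delta_star (kill_reset m) q v = (if q \<in> set v then m else q)"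
  using assms
proof (induction v arbitrary: q)
  case (Cons a v)
  then have "a < m" by simp
  show ?case
  proof (cases "q = a")
    case True
    then have "kill_reset m q a = m" by (simp add: kill_reset_def)
    with True show ?thesis by (simp add: delta_star_kill_reset_sink)
  next
    case False
    with Cons \<open>a < m\<close> show ?thesis by (simp add: kill_reset_def)
  qed
qed simp

lemma live_kill_reset: "live {..<2 * m} (kill_reset m) {..<m} = {..<m}"
proof -
  have "q \<in> live {..<2 * m} (kill_reset m) {..<m}" if "q < m" for q
    using that unfolding live_def by (intro CollectI exI[of _ "[]"]) simp
  moreover have "q \<notin> live {..<2 * m} (kill_reset m) {..<m}" if "\<not> q < m" for q
    using that delta_star_kill_reset_ge[of m q] by (auto simp: live_def not_less)
  ultimately show ?thesis by blast
qed

lemma fact_kill_reset_iff: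
  "v \<in> fact (lang {..<2 * m} 0 (kill_reset m) {..<m}) \<longleftrightarrow>
     set v \<subseteq> {..<2 * m} \<and> (\<exists>q<m. delta_star (kill_reset m) q v < m)"
proof -
  have "q \<in> reachable {..<2 * m} 0 (kill_reset m)" if "q < m" for q
  proof -
    have "delta_star (kill_reset m) 0 [m + q] = q" using that by (simp add: kill_reset_def)
    then show ?thesis using that unfolding reachable_def by (intro CollectI exI[of _ "[m + q]"]) simp
  qed
  moreover have "q < m" if "delta_star (kill_reset m) q v < m" for q
    using that delta_star_kill_reset_ge[of m q v] by (meson not_le)
  ultimately show ?thesis
    unfolding fact_lang_iff live_kill_reset lessThan_iff by blast
qed

text \<open>kill_word m A kills exactly the live states outside A.\<close>

definition kill_word :: "nat \<Rightarrow> nat set \<Rightarrow> nat list" where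
  "kill_word m A = filter (\<lambda>j. j \<notin> A) [0..<m]"

lemma kill_words_in_fact_iff:
  assumes "i < m"
  shows "kill_word m S @ kill_word m {i} \<in> fact (lang {..<2 * m} 0 (kill_reset m) {..<m})
    \<longleftrightarrow> i \<in> S"
proof -
  have letters: "set (kill_word m S @ kill_word m {i}) \<subseteq> {..<m}"
    by (auto simp: kill_word_def)
  have "delta_star (kill_reset m) q (kill_word m S @ kill_word m {i}) < m \<longleftrightarrow> q \<in> S \<and> q = i"
    if "q < m" for q
    using delta_star_kill_reset_kill[OF letters that] that by (auto simp: kill_word_def)
  moreover have "set (kill_word m S @ kill_word m {i}) \<subseteq> {..<2 * m}"
    using letters by auto
  ultimately show ?thesis
    unfolding fact_kill_reset_iff using assms by blast
qed

lemma card_ge_if_accepts_fact_kill_reset: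
  assumes "dfa {..<2 * m} Q q0 d F"
    and "lang {..<2 * m} q0 d F = fact (lang {..<2 * m} 0 (kill_reset m) {..<m})"
  shows "2 ^ m \<le> card Q"
proof -
  have "card (Pow {..<m}) \<le> card Q"
  proof (rule dfa_card_ge_if_distinguishable[OF assms(1), where u = "kill_word m"])
    show "\<forall>S\<in>Pow {..<m}. set (kill_word m S) \<subseteq> {..<2 * m}"
      by (auto simp: kill_word_def)
  next
    fix S T assume "S \<in> Pow {..<m}" "T \<in> Pow {..<m}" "S \<noteq> T"
    then obtain i where "i < m" "i \<in> S \<longleftrightarrow> i \<notin> T" by blast
    moreover have "set (kill_word m {i}) \<subseteq> {..<2 * m}" by (auto simp: kill_word_def)
    ultimately show "\<exists>z. set z \<subseteq> {..<2 * m} \<and>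
        (kill_word m S @ z \<in> lang {..<2 * m} q0 d F \<longleftrightarrow> kill_word m T @ z \<notin> lang {..<2 * m} q0 d F)"
      using kill_words_in_fact_iff[of i m] assms(2) by blast
  qed
  then show ?thesis by (simp add: card_Pow)
qed

lemma min_dfa_states_fact_kill_reset:
  "min_dfa_states {..<2 * m} (fact (lang {..<2 * m} 0 (kill_reset m) {..<m})) = 2 ^ m"
  unfolding min_dfa_states_def
proof (rule Least_equality)
  obtain Q :: "nat set" and q0 d F where M: "dfa {..<2 * m} Q q0 d F"
    "lang {..<2 * m} q0 d F = fact (lang {..<2 * m} 0 (kill_reset m) {..<m})"
    "card Q \<le> 2 ^ (card {..m} - 1)"
    using fact_dfa_card_le[OF dfa_kill_reset] by blast
  then have "card Q = 2 ^ m"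
    using card_ge_if_accepts_fact_kill_reset[OF M(1,2)] by simp
  with M(1,2) show "\<exists>(Q::nat set) q0 d F. dfa {..<2 * m} Q q0 d F \<and>
      lang {..<2 * m} q0 d F = fact (lang {..<2 * m} 0 (kill_reset m) {..<m}) \<and> card Q = 2 ^ m"
    by blast
next
  fix k assume "\<exists>(Q::nat set) q0 d F. dfa {..<2 * m} Q q0 d F \<and>
      lang {..<2 * m} q0 d F = fact (lang {..<2 * m} 0 (kill_reset m) {..<m}) \<and> card Q = k"
  then obtain Q :: "nat set" and q0 d F where M: "dfa {..<2 * m} Q q0 d F"
    "lang {..<2 * m} q0 d F = fact (lang {..<2 * m} 0 (kill_reset m) {..<m})" "card Q = k"
    by blast
  show "2 ^ m \<le> k"
    using card_ge_if_accepts_fact_kill_reset[OF M(1,2)] M(3) by simp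
qed

theorem mainTheorem14:
  shows "(\<forall>(Sig::'a set) (Q::'s set) q0 delta F. dfa Sig Q q0 delta F \<longrightarrow>
            (\<exists>(Q'::nat set) q0' delta' F'. dfa Sig Q' q0' delta' F' \<and>
               lang Sig q0' delta' F' = fact (lang Sig q0 delta F) \<and>
               card Q' \<le> 2 ^ (card Q - 1)))
       \<and> (\<forall>n::nat. n \<ge> 1 \<longrightarrow>
            (\<exists>(Sig::nat set) (Q::nat set) q0 delta F. dfa Sig Q q0 delta F \<and> card Q = n \<and>
               min_dfa_states Sig (fact (lang Sig q0 delta F)) = 2 ^ (n - 1)))"
proof (intro conjI allI impI)
  fix n :: nat assume "n \<ge> 1"
  then have "card {..n - 1} = n" by simp
  then show "\<exists>(Sig::nat set) (Q::nat set) q0 delta F. dfa Sig Q q0 delta F \<and> card Q = n \<and>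
      min_dfa_states Sig (fact (lang Sig q0 delta F)) = 2 ^ (n - 1)"
    using dfa_kill_reset min_dfa_states_fact_kill_reset by blast
qed (rule fact_dfa_card_le)

end
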